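(* Let $M$ be a complex manifold of complex dimension $2k+1$ ($k\ge 1$) and let $\omega=\{(U_i,\omega_i)\}$ be a singular contact structure on $M$ of the first type with structurally smooth Martinet hypersurface. Let $L=T^{1,0}M/\mathrm{Ker}(\omega)$, let $\mathfrak{a}(M,\widetilde\omega)$ denote the sheaf of (germs of) infinitesimal contact transformations of $\omega$, and let $\theta:\mathfrak{a}(M,\widetilde\omega)\to\mathcal{O}(L)$ be the map $\theta(X)=\widetilde\omega(X)$. Then the sequence of sheaves $$0\longrightarrow \mathfrak{a}(M,\widetilde\omega)\stackrel{\theta}{\longrightarrow}\mathcal{O}(L)$$ is exact, i.e. $\theta$ is injective.
   Context: A singular contact form on $M$ is a collection $\{(U_i,\omega_i)\}_{i\in I}$ where $\{U_i\}$ is an open cover of $M$ and each $\omega_i$ is a holomorphic $1$-form on $U_i$ such that (1) $\omega_i\wedge(d\omega_i)^k$ vanishes only on a nowhere dense subset of $U_i$, and (2) for all $i,j$ there is a nowhere vanishing holomorphic $f_{ij}$ on $U_i\cap U_j$ with $\omega_i=f_{ij}\omega_j$. Two such forms $\{(U_i,\omega_i)\},\{(V_j,\mu_j)\}$ are equivalent if $\omega_i=h_{ij}\mu_j$ on $U_i\cap V_j$ for nowhere vanishing holomorphic $h_{ij}$; a singular contact structure is an equivalence class. Its kernel $\mathrm{Ker}(\omega)$ is the corank-one subbundle of $T^{1,0}M$ given locally by $\ker\omega_i$. The Martinet hypersurface is $S=\{x:\ (\omega_i\wedge(d\omega_i)^k)(x)=0\}$. Writing $\omega_i\wedge(d\omega_i)^k=H_i\Omega_i$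 with $\Omega_i$ a nowhere vanishing holomorphic $(2k+1)$-form on $U_i$, $S$ is structurally smooth if $dH_i(x)\neq 0$ for all $x\in S\cap U_i$. The structure has singularities of the first type if $\omega_i$ never vanishes (in particular on $S$). Choosing local sections $s_i$ of $L$ with $\omega_i(s_i)\equiv1$, $\widetilde\omega=s_i\otimes\omega_i$ is a globally defined $L$-valued $1$-form. A holomorphic vector field $X$ (on an open set) is an infinitesimal contact transformation if $\mathcal{L}_X\omega_i=h_i\omega_i$ for some holomorphic functions $h_i$. *)

theory Defs
  imports "HOL-Analysis.Analysis"
begin

text \<open>A chart of the complex manifold M of dimension 2k+1 is an
open subset of C^n, n = CARD('n), represented as complex^'n.  The index type 'n
carries a linear order used to order the coordinates dz_j.\<close>

definition coord_line :: "complex^'n \<Rightarrow> 'n \<Rightarrow> complex \<Rightarrow> complex^'n" where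
  "coord_line z j t = z + (\<chi> i. if i = j then t else 0)"

definition holo_on :: "(complex^('n::finite)) set \<Rightarrow> (complex^'n \<Rightarrow> complex) \<Rightarrow> bool" where
  "holo_on U f \<longleftrightarrow> (\<forall>z\<in>U. \<exists>D. (f has_derivative D) (at z) \<and>
      (\<forall>v. D (\<chi> i. \<i> * v$i) = \<i> * D v))"

definition pdz :: "(complex^'n \<Rightarrow> complex) \<Rightarrow> 'n \<Rightarrow> complex^'n \<Rightarrow> complex" where
  "pdz f j z = deriv (\<lambda>t. f (coord_line z j t)) 0"

text \<open>Exterior algebra at a point: a p-form is given by its coefficients
 c(S) on dz_{s1} \<and> ... \<and> dz_{sp}, S = {s1 < ... < sp}.\<close>
definition wsign :: "'n::linorder set \<Rightarrow> 'n set \<Rightarrow> complex" where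
  "wsign A B = (-1) ^ card {(a,b). a \<in> A \<and> b \<in> B \<and> b < a}"

definition wedge :: "(('n::{finite,linorder}) set \<Rightarrow> complex) \<Rightarrow> nat \<Rightarrow> (('n::{finite,linorder}) set \<Rightarrow> complex)
     \<Rightarrow> 'n set \<Rightarrow> complex" where
  "wedge \<alpha> p \<beta> S = (\<Sum>A\<in>{A. A \<subseteq> S \<and> card A = p}. wsign A (S - A) * \<alpha> A * \<beta> (S - A))"

definition form1 :: "('n::finite \<Rightarrow> complex^'n \<Rightarrow> complex) \<Rightarrow> complex^'n \<Rightarrow> 'n set \<Rightarrow> complex" where
  "form1 a z S = (if card S = 1 then a (the_elem S) z else 0)"

definition dform1 :: "(('n::{finite,linorder}) \<Rightarrow> complex^('n::{finite,linorder}) \<Rightarrow> complex) \<Rightarrow> complex^('n::{finite,linorder}) \<Rightarrow> ('n::{finite,linorder}) set \<Rightarrow> complex" where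
  "dform1 a z S = (if card S = 2 then pdz (a (Max S)) (Min S) z - pdz (a (Min S)) (Max S) z else 0)"

fun dpow :: "(('n::{finite,linorder}) \<Rightarrow> complex^('n::{finite,linorder}) \<Rightarrow> complex) \<Rightarrow> nat \<Rightarrow> complex^('n::{finite,linorder}) \<Rightarrow> ('n::{finite,linorder}) set \<Rightarrow> complex" where
  "dpow a 0 z S = (if S = {} then 1 else 0)"
| "dpow a (Suc m) z S = wedge (dform1 a z) 2 (dpow a m z) S"

text \<open>coefficient H of  omega \<and> (d omega)^k = H dz_1 \<and> ... \<and> dz_n\<close>
definition martinet_coeff :: "(('n::{finite,linorder}) \<Rightarrow> complex^('n::{finite,linorder}) \<Rightarrow> complex) \<Rightarrow> nat \<Rightarrow> complex^('n::{finite,linorder}) \<Rightarrow> complex" where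
  "martinet_coeff a k z = wedge (form1 a z) 1 (dpow a k z) UNIV"

text \<open>Lie derivative of omega = sum a_j dz_j along X = sum X_j d/dz_j, j-th coefficient\<close>
definition lie_coeff :: "('n::finite \<Rightarrow> complex^'n \<Rightarrow> complex) \<Rightarrow> ('n \<Rightarrow> complex^'n \<Rightarrow> complex)
     \<Rightarrow> 'n \<Rightarrow> complex^'n \<Rightarrow> complex" where
  "lie_coeff X a j z = (\<Sum>l\<in>UNIV. X l z * pdz (a j) l z + a l z * pdz (X l) j z)"

definition sing_contact_first_smooth :: "nat \<Rightarrow> (complex^(('n::{finite,linorder}))) set
      \<Rightarrow> (('n::{finite,linorder}) \<Rightarrow> complex^('n::{finite,linorder}) \<Rightarrow> complex) \<Rightarrow> bool" where
  "sing_contact_first_smooth k U a \<longleftrightarrow>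
     open U \<and> (\<forall>j. holo_on U (a j)) \<and>
     interior {z\<in>U. martinet_coeff a k z = 0} = {} \<and>
     (\<forall>z\<in>U. \<exists>j. a j z \<noteq> 0) \<and>
     (\<forall>z\<in>U. martinet_coeff a k z = 0 \<longrightarrow> (\<exists>j. pdz (martinet_coeff a k) j z \<noteq> 0))"

definition inf_contact_transf :: "(complex^('n::finite)) set \<Rightarrow> ('n \<Rightarrow> complex^'n \<Rightarrow> complex)
      \<Rightarrow> ('n \<Rightarrow> complex^'n \<Rightarrow> complex) \<Rightarrow> bool" where
  "inf_contact_transf V a X \<longleftrightarrow> (\<forall>j. holo_on V (X j)) \<and>
     (\<exists>h. holo_on V h \<and> (\<forall>z\<in>V. \<forall>j. lie_coeff X a j z = h z * a j z))"

end

theory Submission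
  imports Defs
begin

(* Let X satisfy \<omega>(X) = 0 and L\<^sub>X \<omega> = h \<omega>. By Cartan's formula \<iota>\<^sub>X d\<omega> = L\<^sub>X \<omega> - d(\<omega>(X)) = h \<omega>,
   so \<iota>\<^sub>X (d\<omega>)\<^sup>k = k h \<omega> \<and> (d\<omega>)\<^sup>k\<^sup>-\<^sup>1 and therefore
   \<iota>\<^sub>X (\<omega> \<and> (d\<omega>)\<^sup>k) = \<omega>(X) (d\<omega>)\<^sup>k - \<omega> \<and> \<iota>\<^sub>X (d\<omega>)\<^sup>k = 0.
   Writing \<omega> \<and> (d\<omega>)\<^sup>k = H dz\<^sub>1 \<and> ... \<and> dz\<^sub>n, the contraction of this top form with X has
   the coefficients \<plusminus>X\<^sub>j H, so X\<^sub>j H = 0. As the Martinet hypersurface {H = 0} has empty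
   interior and X is continuous, X = 0. *)

section \<open>Exterior algebra of coefficient functions\<close>

(* As in Defs, a form is the function S \<mapsto> coefficient of dz\<^sub>S (S listed increasingly).
   wedge_dz i f is dz\<^sub>i \<and> f, contract_dz i f is the contraction of f with \<partial>/\<partial>z\<^sub>i, and
   insert_sign i T is the sign of moving dz\<^sub>i past the dz\<^sub>b with b \<in> T, b < i. *)
definition insert_sign :: "'n::linorder \<Rightarrow> 'n set \<Rightarrow> complex" where
  "insert_sign i T = (-1) ^ card {b\<in>T. b < i}"

definition wedge_dz :: "'n::linorder \<Rightarrow> ('n set \<Rightarrow> complex) \<Rightarrow> 'n set \<Rightarrow> complex" where
  "wedge_dz i f S = (if i \<in> S then insert_sign i (S - {i}) * f (S - {i}) else 0)"

definition contract_dz :: "'n::linorder \<Rightarrow> ('n set \<Rightarrow> complex) \<Rightarrow> 'n set \<Rightarrow> complex" where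
  "contract_dz i f S = (if i \<in> S then 0 else insert_sign i S * f (insert i S))"

lemma insert_sign_square: "insert_sign i T * insert_sign i T = 1"
  by (simp add: insert_sign_def power_mult_distrib[symmetric])

lemma insert_sign_insert:
  fixes T :: "'n::{finite,linorder} set"
  assumes "j \<notin> T" "j \<noteq> i"
  shows "insert_sign i (insert j T) = (if j < i then - insert_sign i T else insert_sign i T)"
proof -
  have "{b \<in> insert j T. b < i} = (if j < i then insert j {b\<in>T. b < i} else {b\<in>T. b < i})"
    by auto
  then show ?thesis using assms by (simp add: insert_sign_def)
qed

lemma wedge_dz_anticommute:
  fixes f :: "'n::{finite,linorder} set \<Rightarrow> complex"
  shows "wedge_dz i (wedge_dz j f) S = - wedge_dz j (wedge_dz i f) S"
proof (cases "i \<noteq> j \<and> i \<in> S \<and> j \<in> S")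
  case True
  define R where "R = S - {i, j}"
  have R: "S - {i} = insert j R" "S - {j} = insert i R" "i \<notin> R" "j \<notin> R"
    using True by (auto simp: R_def)
  have "wedge_dz i (wedge_dz j f) S = insert_sign i (insert j R) * insert_sign j R * f R"
    using True R by (simp add: wedge_dz_def)
  moreover have "wedge_dz j (wedge_dz i f) S = insert_sign j (insert i R) * insert_sign i R * f R"
    using True R by (simp add: wedge_dz_def)
  moreover have "insert_sign i (insert j R) = (if j < i then - insert_sign i R else insert_sign i R)"
    by (rule insert_sign_insert) (use True R in auto)
  moreover have "insert_sign j (insert i R) = (if i < j then - insert_sign j R else insert_sign j R)"
    by (rule insert_sign_insert) (use True R in auto)
  ultimately show ?thesis
    using True by (cases "i < j") auto
next
  case False
  then consider "i = j" | "i \<notin> S" | "j \<notin> S" by blast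
  then show ?thesis by cases (simp_all add: wedge_dz_def)
qed

lemma contract_dz_wedge_dz:
  fixes f :: "'n::{finite,linorder} set \<Rightarrow> complex"
  shows "contract_dz l (wedge_dz i f) S + wedge_dz i (contract_dz l f) S = (if l = i then f S else 0)"
proof (cases "l = i")
  case True
  have "insert i (S - {i}) = S" if "i \<in> S" using that by blast
  moreover have "insert i S - {i} = S" if "i \<notin> S" using that by blast
  ultimately show ?thesis
    using True by (simp add: wedge_dz_def contract_dz_def insert_sign_square mult.assoc[symmetric])
next
  case False
  show ?thesis
  proof (cases "l \<notin> S \<and> i \<in> S")
    case True
    define R where "R = S - {i}"
    have R: "S = insert i R" "insert l S - {i} = insert l R" "i \<notin> R" "l \<notin> R"
      using True False by (auto simp: R_def)
    have "contract_dz l (wedge_dz i f) S = insert_sign l (insert i R) * insert_sign i (insert l R) * f (insert l R)"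
      using True False R by (simp add: wedge_dz_def contract_dz_def)
    moreover have "wedge_dz i (contract_dz l f) S = insert_sign i R * insert_sign l R * f (insert l R)"
      using True R by (simp add: wedge_dz_def contract_dz_def)
    moreover have "insert_sign l (insert i R) = (if i < l then - insert_sign l R else insert_sign l R)"
      by (rule insert_sign_insert) (use False R in auto)
    moreover have "insert_sign i (insert l R) = (if l < i then - insert_sign i R else insert_sign i R)"
      by (rule insert_sign_insert) (use False R in auto)
    ultimately show ?thesis
      using False by (cases "i < l") (simp_all add: not_less_iff_gr_or_eq)
  next
    case outside: False
    then consider "l \<in> S" | "i \<notin> S" by blast
    then show ?thesis using False by cases (simp_all add: contract_dz_def wedge_dz_def)
  qed
qed

lemma wedge_dz_lincomb:
  "wedge_dz i (\<lambda>T. \<Sum>m\<in>M. c m * g m T) = (\<lambda>S. \<Sum>m\<in>M. c m * wedge_dz i (g m) S)"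
  by (simp add: fun_eq_iff wedge_dz_def sum_distrib_left mult.left_commute)

lemma contract_dz_lincomb:
  "contract_dz i (\<lambda>T. \<Sum>m\<in>M. c m * g m T) = (\<lambda>S. \<Sum>m\<in>M. c m * contract_dz i (g m) S)"
  by (simp add: fun_eq_iff contract_dz_def sum_distrib_left mult.left_commute)

definition wedge1 :: "('n::linorder \<Rightarrow> complex) \<Rightarrow> ('n set \<Rightarrow> complex) \<Rightarrow> 'n set \<Rightarrow> complex" where
  "wedge1 c f = (\<lambda>S. \<Sum>j\<in>UNIV. c j * wedge_dz j f S)"

definition wedge2 :: "('n::linorder \<Rightarrow> 'n \<Rightarrow> complex) \<Rightarrow> ('n set \<Rightarrow> complex) \<Rightarrow> 'n set \<Rightarrow> complex" where
  "wedge2 D f = (\<lambda>S. \<Sum>i\<in>UNIV. \<Sum>j\<in>UNIV. D i j * wedge_dz i (wedge_dz j f) S)"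

definition contract :: "('n::linorder \<Rightarrow> complex) \<Rightarrow> ('n set \<Rightarrow> complex) \<Rightarrow> 'n set \<Rightarrow> complex" where
  "contract x f = (\<lambda>S. \<Sum>l\<in>UNIV. x l * contract_dz l f S)"

lemma wedge1_lincomb:
  fixes g :: "'m \<Rightarrow> 'n::{finite,linorder} set \<Rightarrow> complex"
  shows "wedge1 c (\<lambda>T. \<Sum>m\<in>M. a m * g m T) S = (\<Sum>m\<in>M. a m * wedge1 c (g m) S)"
  unfolding wedge1_def wedge_dz_lincomb sum_distrib_left
  by (subst sum.swap) (simp add: mult_ac)

lemma wedge1_sum:
  fixes g :: "'m \<Rightarrow> 'n::{finite,linorder} set \<Rightarrow> complex"
  shows "wedge1 c (\<lambda>T. \<Sum>m\<in>M. g m T) S = (\<Sum>m\<in>M. wedge1 c (g m) S)"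
  using wedge1_lincomb[where a="\<lambda>_. 1"] by simp

lemma wedge_dz_scale: "wedge_dz i (\<lambda>T. a * g T) = (\<lambda>S. a * wedge_dz i g S)"
  by (simp add: fun_eq_iff wedge_dz_def mult_ac)

lemma wedge1_scale: "wedge1 c (\<lambda>T. a * g T) S = a * wedge1 c g S"
  by (simp add: wedge1_def wedge_dz_scale sum_distrib_left mult_ac)

lemma wedge2_scale: "wedge2 D (\<lambda>T. a * g T) S = a * wedge2 D g S"
  by (simp add: wedge2_def wedge_dz_scale sum_distrib_left mult_ac)

lemma contract_lincomb:
  fixes g :: "'m \<Rightarrow> 'n::{finite,linorder} set \<Rightarrow> complex"
  shows "contract x (\<lambda>T. \<Sum>m\<in>M. a m * g m T) S = (\<Sum>m\<in>M. a m * contract x (g m) S)"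
  unfolding contract_def contract_dz_lincomb sum_distrib_left
  by (subst sum.swap) (simp add: mult_ac)

lemma contract_sum:
  fixes g :: "'m \<Rightarrow> 'n::{finite,linorder} set \<Rightarrow> complex"
  shows "contract x (\<lambda>T. \<Sum>m\<in>M. g m T) S = (\<Sum>m\<in>M. contract x (g m) S)"
  using contract_lincomb[where a="\<lambda>_. 1"] by simp

lemma wedge2_eq_sum_wedge_dz:
  fixes f :: "'n::{finite,linorder} set \<Rightarrow> complex"
  shows "wedge2 D f = (\<lambda>S. \<Sum>i\<in>UNIV. wedge_dz i (wedge1 (D i) f) S)"
  by (simp add: wedge2_def wedge1_def wedge_dz_lincomb)

lemma contract_wedge_dz:
  fixes f :: "'n::{finite,linorder} set \<Rightarrow> complex"
  shows "contract x (wedge_dz i f) S + wedge_dz i (contract x f) S = x i * f S"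
proof -
  have "contract x (wedge_dz i f) S + wedge_dz i (contract x f) S =
      (\<Sum>l\<in>UNIV. x l * (contract_dz l (wedge_dz i f) S + wedge_dz i (contract_dz l f) S))"
    unfolding contract_def wedge_dz_lincomb by (simp add: distrib_left sum.distrib)
  also have "\<dots> = x i * f S"
    by (simp add: contract_dz_wedge_dz if_distrib cong: if_cong)
  finally show ?thesis .
qed

lemma contract_wedge1:
  fixes f :: "'n::{finite,linorder} set \<Rightarrow> complex"
  shows "contract x (wedge1 c f) S + wedge1 c (contract x f) S = (\<Sum>j\<in>UNIV. c j * x j) * f S"
proof -
  have "contract x (wedge1 c f) S + wedge1 c (contract x f) S =
      (\<Sum>j\<in>UNIV. c j * (contract x (wedge_dz j f) S + wedge_dz j (contract x f) S))"
    unfolding wedge1_def[of c f] contract_lincomb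
    by (simp add: wedge1_def distrib_left sum.distrib)
  then show ?thesis
    by (simp add: contract_wedge_dz sum_distrib_right mult.assoc)
qed

lemma wedge1_wedge_dz:
  fixes f :: "'n::{finite,linorder} set \<Rightarrow> complex"
  shows "wedge1 c (wedge_dz i f) S = - wedge_dz i (wedge1 c f) S"
  unfolding wedge1_def wedge_dz_lincomb
  by (subst wedge_dz_anticommute) (simp add: sum_negf)

lemma wedge1_anticommute:
  fixes f :: "'n::{finite,linorder} set \<Rightarrow> complex"
  shows "wedge1 c (wedge1 d f) S = - wedge1 d (wedge1 c f) S"
  unfolding wedge1_def[of d f] wedge1_lincomb
  by (simp add: wedge1_wedge_dz wedge1_def[of d] sum_negf)

lemma wedge1_self:
  fixes f :: "'n::{finite,linorder} set \<Rightarrow> complex"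
  shows "wedge1 c (wedge1 c f) S = 0"
  using wedge1_anticommute[of c c f S] by simp

lemma wedge1_wedge2:
  fixes f :: "'n::{finite,linorder} set \<Rightarrow> complex"
  shows "wedge1 c (wedge2 D f) S = wedge2 D (wedge1 c f) S"
proof -
  have "wedge1 (D i) (wedge1 c f) = (\<lambda>S. - wedge1 c (wedge1 (D i) f) S)" for i
    by (rule ext) (rule wedge1_anticommute)
  then have "wedge_dz i (wedge1 (D i) (wedge1 c f)) S = - wedge_dz i (wedge1 c (wedge1 (D i) f)) S" for i
    by (simp add: wedge_dz_def)
  then show ?thesis
    unfolding wedge2_eq_sum_wedge_dz wedge1_sum
    by (simp add: wedge1_wedge_dz)
qed

lemma contract_wedge2:
  fixes f :: "'n::{finite,linorder} set \<Rightarrow> complex"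
  shows "contract x (wedge2 D f) S =
    wedge2 D (contract x f) S + wedge1 (\<lambda>j. \<Sum>i\<in>UNIV. x i * (D i j - D j i)) f S"
proof -
  have summand: "contract x (wedge_dz i (wedge1 (D i) f)) S =
      x i * wedge1 (D i) f S - (\<Sum>j\<in>UNIV. D i j * x j) * wedge_dz i f S
      + wedge_dz i (wedge1 (D i) (contract x f)) S" for i
  proof -
    have "contract x (wedge1 (D i) f) = (\<lambda>T. (\<Sum>j\<in>UNIV. D i j * x j) * f T - wedge1 (D i) (contract x f) T)"
      using contract_wedge1[of x "D i" f] by (simp add: fun_eq_iff eq_diff_eq)
    then have "wedge_dz i (contract x (wedge1 (D i) f)) S =
        (\<Sum>j\<in>UNIV. D i j * x j) * wedge_dz i f S - wedge_dz i (wedge1 (D i) (contract x f)) S"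
      by (simp add: wedge_dz_def algebra_simps)
    moreover have "contract x (wedge_dz i (wedge1 (D i) f)) S =
        x i * wedge1 (D i) f S - wedge_dz i (contract x (wedge1 (D i) f)) S"
      using contract_wedge_dz[of x i "wedge1 (D i) f" S] by (simp add: eq_diff_eq)
    ultimately show ?thesis by simp
  qed
  have "(\<Sum>j\<in>UNIV. \<Sum>i\<in>UNIV. x i * D i j * wedge_dz j f S) = (\<Sum>i\<in>UNIV. x i * wedge1 (D i) f S)"
    by (subst sum.swap) (simp add: wedge1_def sum_distrib_left mult.assoc)
  moreover have "(\<Sum>j\<in>UNIV. \<Sum>i\<in>UNIV. x i * D j i * wedge_dz j f S)
      = (\<Sum>i\<in>UNIV. (\<Sum>j\<in>UNIV. D i j * x j) * wedge_dz i f S)"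
    by (simp add: sum_distrib_left sum_distrib_right mult_ac)
  ultimately have "wedge1 (\<lambda>j. \<Sum>i\<in>UNIV. x i * (D i j - D j i)) f S
      = (\<Sum>i\<in>UNIV. x i * wedge1 (D i) f S) - (\<Sum>i\<in>UNIV. (\<Sum>j\<in>UNIV. D i j * x j) * wedge_dz i f S)"
    by (simp add: wedge1_def right_diff_distrib left_diff_distrib sum_subtractf sum_distrib_right)
  then show ?thesis
    unfolding wedge2_eq_sum_wedge_dz contract_sum summand
    by (simp add: sum.distrib sum_subtractf)
qed

lemma wedge1_coeff_scale: "wedge1 (\<lambda>j. a * c j) f S = a * wedge1 c f S"
  by (simp add: wedge1_def sum_distrib_left mult.assoc)

(* At m = 0 the truncated exponent m - 1 is harmless: its coefficient of_nat m vanishes. *)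
lemma contract_wedge2_power:
  fixes f :: "'n::{finite,linorder} set \<Rightarrow> complex"
  assumes coeff: "\<And>j. (\<Sum>i\<in>UNIV. x i * (D i j - D j i)) = h * c j"
    and closed: "contract x f = (\<lambda>S. 0)"
  shows "contract x ((wedge2 D ^^ m) f) S = of_nat m * h * wedge1 c ((wedge2 D ^^ (m - 1)) f) S"
proof (induction m arbitrary: S)
  case 0
  show ?case using closed by (simp add: fun_eq_iff)
next
  case (Suc m)
  have "wedge2 D (contract x ((wedge2 D ^^ m) f)) S =
      of_nat m * h * wedge1 c (wedge2 D ((wedge2 D ^^ (m - 1)) f)) S"
    unfolding Suc.IH[abs_def] wedge2_scale wedge1_wedge2 ..
  also have "\<dots> = of_nat m * h * wedge1 c ((wedge2 D ^^ m) f) S"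
    by (cases m) simp_all
  moreover have "(\<lambda>j. \<Sum>i\<in>UNIV. x i * (D i j - D j i)) = (\<lambda>j. h * c j)"
    using coeff by simp
  ultimately show ?case
    by (simp add: contract_wedge2 wedge1_coeff_scale algebra_simps)
qed

lemma contract_wedge1_wedge2_power:
  fixes f :: "'n::{finite,linorder} set \<Rightarrow> complex"
  assumes coeff: "\<And>j. (\<Sum>i\<in>UNIV. x i * (D i j - D j i)) = h * c j"
    and orth: "(\<Sum>j\<in>UNIV. c j * x j) = 0"
    and closed: "contract x f = (\<lambda>S. 0)"
  shows "contract x (wedge1 c ((wedge2 D ^^ m) f)) S = 0"
proof -
  have "contract x (wedge1 c ((wedge2 D ^^ m) f)) S = - wedge1 c (contract x ((wedge2 D ^^ m) f)) S"
    using contract_wedge1[of x c "(wedge2 D ^^ m) f" S] orth by (simp add: eq_neg_iff_add_eq_0)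
  also have "\<dots> = - (of_nat m * h * wedge1 c (wedge1 c ((wedge2 D ^^ (m - 1)) f)) S)"
    unfolding contract_wedge2_power[OF coeff closed, abs_def] wedge1_scale ..
  finally show ?thesis by (simp add: wedge1_self)
qed

section \<open>The Martinet coefficient\<close>

definition form_one :: "'n set \<Rightarrow> complex" where
  "form_one S = (if S = {} then 1 else 0)"

lemma contract_form_one: "contract x form_one = (\<lambda>S. 0)"
  by (simp add: fun_eq_iff contract_def contract_dz_def form_one_def cong: if_cong)

lemma contract_at_UNIV_Diff:
  fixes f :: "'n::{finite,linorder} set \<Rightarrow> complex"
  shows "contract x f (UNIV - {j}) = x j * insert_sign j (UNIV - {j}) * f UNIV"
proof -
  have "contract x f (UNIV - {j}) = (\<Sum>l\<in>UNIV. if l = j then x j * insert_sign j (UNIV - {j}) * f UNIV else 0)"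
    unfolding contract_def contract_dz_def by (intro sum.cong refl) (auto simp: insert_absorb)
  then show ?thesis by simp
qed

lemma coord_mult_top_coeff_eq_0:
  fixes x c :: "'n::{finite,linorder} \<Rightarrow> complex"
  assumes "\<And>j. (\<Sum>i\<in>UNIV. x i * (D i j - D j i)) = h * c j"
    and "(\<Sum>j\<in>UNIV. c j * x j) = 0"
  shows "x j * wedge1 c ((wedge2 D ^^ m) form_one) UNIV = 0"
proof -
  have "x j * insert_sign j (UNIV - {j}) * wedge1 c ((wedge2 D ^^ m) form_one) UNIV = 0"
    using contract_wedge1_wedge2_power[OF assms contract_form_one]
    by (simp flip: contract_at_UNIV_Diff)
  moreover have "insert_sign j (UNIV - {j}) \<noteq> 0"
    by (simp add: insert_sign_def)
  ultimately show ?thesis by simp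
qed

lemma wsign_singleton:
  fixes T :: "'n::{finite,linorder} set"
  shows "wsign {j} T = insert_sign j T"
proof -
  have "{(a, b). a \<in> {j} \<and> b \<in> T \<and> b < a} = Pair j ` {b\<in>T. b < j}" by auto
  then show ?thesis by (simp add: wsign_def insert_sign_def card_image inj_on_def)
qed

lemma wsign_doubleton:
  fixes T :: "'n::{finite,linorder} set"
  assumes "i \<noteq> j"
  shows "wsign {i, j} T = insert_sign i T * insert_sign j T"
proof -
  have "{(a, b). a \<in> {i, j} \<and> b \<in> T \<and> b < a} = Pair i ` {b\<in>T. b < i} \<union> Pair j ` {b\<in>T. b < j}"
    by auto
  moreover have "Pair i ` {b\<in>T. b < i} \<inter> Pair j ` {b\<in>T. b < j} = {}"
    using assms by auto
  ultimately show ?thesis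
    by (simp add: wsign_def insert_sign_def card_Un_disjoint card_image inj_on_def power_add)
qed

lemma wedge_form1_eq_wedge1:
  fixes g :: "'n::{finite,linorder} set \<Rightarrow> complex"
  shows "wedge (form1 a z) 1 g S = wedge1 (\<lambda>j. a j z) g S"
proof -
  have "{A. A \<subseteq> S \<and> card A = 1} = (\<lambda>j. {j}) ` S"
    by (auto simp: card_1_singleton_iff)
  then have "wedge (form1 a z) 1 g S = (\<Sum>j\<in>S. a j z * (insert_sign j (S - {j}) * g (S - {j})))"
    unfolding wedge_def by (simp add: sum.reindex wsign_singleton form1_def mult_ac)
  also have "\<dots> = wedge1 (\<lambda>j. a j z) g S"
    unfolding wedge1_def wedge_dz_def by (simp add: if_distrib sum.If_cases cong: if_cong)
  finally show ?thesis .
qed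

lemma wedge_dz_wedge_dz_eq_wsign:
  fixes g :: "'n::{finite,linorder} set \<Rightarrow> complex"
  assumes "i < j" "i \<in> S" "j \<in> S"
  shows "wedge_dz i (wedge_dz j g) S = wsign {i, j} (S - {i, j}) * g (S - {i, j})"
proof -
  have "{b \<in> S - {i}. b < i} = {b \<in> S - {i, j}. b < i}" using assms by auto
  then have "insert_sign i (S - {i}) = insert_sign i (S - {i, j})" by (simp add: insert_sign_def)
  moreover have "S - {i} - {j} = S - {i, j}" by auto
  ultimately show ?thesis
    using assms by (simp add: wedge_dz_def wsign_doubleton)
qed

lemma wedge2_eq_sum_ordered:
  fixes g :: "'n::{finite,linorder} set \<Rightarrow> complex"
  shows "wedge2 D g S = (\<Sum>i\<in>S. \<Sum>j\<in>{j\<in>S. i < j}. (D i j - D j i) * wedge_dz i (wedge_dz j g) S)"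
proof -
  define t where "t i j = D i j * wedge_dz i (wedge_dz j g) S" for i j
  have "t i j = (if i < j then t i j else 0) + (if j < i then t i j else 0)" for i j
    by (cases i j rule: linorder_cases) (simp_all add: t_def wedge_dz_def)
  then have "wedge2 D g S = (\<Sum>i\<in>UNIV. \<Sum>j\<in>UNIV. if i < j then t i j else 0)
      + (\<Sum>i\<in>UNIV. \<Sum>j\<in>UNIV. if j < i then t i j else 0)"
    unfolding wedge2_def t_def[symmetric] sum.distrib[symmetric] by presburger
  also have "(\<Sum>i\<in>UNIV. \<Sum>j\<in>UNIV. if j < i then t i j else 0)
      = (\<Sum>i\<in>UNIV. \<Sum>j\<in>UNIV. if i < j then t j i else 0)"
    by (rule sum.swap)
  also have "(\<Sum>i\<in>UNIV. \<Sum>j\<in>UNIV. if i < j then t i j else 0) + \<dots>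
      = (\<Sum>i\<in>UNIV. \<Sum>j\<in>UNIV. if i < j then (D i j - D j i) * wedge_dz i (wedge_dz j g) S else 0)"
  proof -
    have "t i j + t j i = (D i j - D j i) * wedge_dz i (wedge_dz j g) S" for i j
      by (simp add: t_def wedge_dz_anticommute[of j i] algebra_simps)
    then show ?thesis
      unfolding sum.distrib[symmetric] by (intro sum.cong refl) simp
  qed
  also have "\<dots> = (\<Sum>i\<in>S. \<Sum>j\<in>{j\<in>S. i < j}. (D i j - D j i) * wedge_dz i (wedge_dz j g) S)"
  proof (rule sum.mono_neutral_cong_right)
    show "\<forall>i\<in>UNIV - S. (\<Sum>j\<in>UNIV. if i < j then (D i j - D j i) * wedge_dz i (wedge_dz j g) S else 0) = 0"
      by (simp add: wedge_dz_def cong: if_cong)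
    show "(\<Sum>j\<in>UNIV. if i < j then (D i j - D j i) * wedge_dz i (wedge_dz j g) S else 0)
        = (\<Sum>j\<in>{j\<in>S. i < j}. (D i j - D j i) * wedge_dz i (wedge_dz j g) S)" for i
      by (rule sum.mono_neutral_cong_right) (auto simp: wedge_dz_def)
  qed auto
  finally show ?thesis .
qed

lemma wedge_two_eq_sum_ordered:
  fixes g :: "'n::{finite,linorder} set \<Rightarrow> complex"
  shows "wedge \<beta> 2 g S = (\<Sum>i\<in>S. \<Sum>j\<in>{j\<in>S. i < j}. wsign {i, j} (S - {i, j}) * \<beta> {i, j} * g (S - {i, j}))"
proof -
  let ?P = "SIGMA i:S. {j\<in>S. i < j}"
  have pairs: "{A. A \<subseteq> S \<and> card A = 2} = (\<lambda>(i, j). {i, j}) ` ?P"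
  proof (intro equalityI subsetI)
    fix A assume "A \<in> {A. A \<subseteq> S \<and> card A = 2}"
    then obtain i j where "A = {i, j}" "i < j" "i \<in> S" "j \<in> S"
      by (auto simp: card_2_iff neq_iff insert_commute)
    then show "A \<in> (\<lambda>(i, j). {i, j}) ` ?P" by force
  qed auto
  have inj: "inj_on (\<lambda>(i, j). {i, j}) ?P"
    by (auto simp: inj_on_def doubleton_eq_iff)
  show ?thesis
    unfolding wedge_def pairs using inj by (simp add: sum.reindex sum.Sigma split_def)
qed

lemma wedge_dform1_eq_wedge2:
  fixes g :: "'n::{finite,linorder} set \<Rightarrow> complex"
  shows "wedge (dform1 a z) 2 g S = wedge2 (\<lambda>i j. pdz (a j) i z) g S"
  unfolding wedge_two_eq_sum_ordered wedge2_eq_sum_ordered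
  by (intro sum.cong refl)
     (auto simp: wedge_dz_wedge_dz_eq_wsign dform1_def max_def min_def)

lemma dpow_Suc_eq_wedge2: "dpow a (Suc m) z = wedge2 (\<lambda>i j. pdz (a j) i z) (dpow a m z)"
  by (rule ext) (simp add: wedge_dform1_eq_wedge2)

lemma dpow_eq_wedge2_power: "dpow a m z = (wedge2 (\<lambda>i j. pdz (a j) i z) ^^ m) form_one"
proof (induction m)
  case 0
  show ?case by (simp add: fun_eq_iff form_one_def)
next
  case (Suc m)
  then show ?case by (simp add: dpow_Suc_eq_wedge2)
qed

lemma martinet_coeff_eq_wedge1_wedge2_power:
  "martinet_coeff a k z = wedge1 (\<lambda>j. a j z) ((wedge2 (\<lambda>i j. pdz (a j) i z) ^^ k) form_one) UNIV"
  unfolding martinet_coeff_def wedge_form1_eq_wedge1 dpow_eq_wedge2_power ..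

section \<open>Holomorphic functions along coordinate lines\<close>

lemma holo_on_subset: "holo_on U f \<Longrightarrow> V \<subseteq> U \<Longrightarrow> holo_on V f"
  by (auto simp: holo_on_def)

lemma holo_on_imp_continuous_on: "holo_on V f \<Longrightarrow> continuous_on V f"
  unfolding holo_on_def by (meson continuous_at_imp_continuous_on has_derivative_continuous)

lemma coord_line_eq_axis: "coord_line z j t = z + axis j t"
  by (simp add: coord_line_def axis_def)

lemma coord_line_0 [simp]: "coord_line z j 0 = z"
  by (simp add: coord_line_def vec_eq_iff)

lemma bounded_linear_axis: "bounded_linear (axis j :: complex \<Rightarrow> complex^'n)"
  by (rule linear_conv_bounded_linear[THEN iffD1], rule linearI) (simp_all add: axis_def vec_eq_iff)

lemma complex_linear_axis:
  fixes D :: "complex^'n \<Rightarrow> complex"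
  assumes "linear D" and D_mult_i: "\<And>v. D (\<chi> i. \<i> * v$i) = \<i> * D v"
  shows "D (axis j t) = D (axis j 1) * t"
proof -
  have "axis j t = Re t *\<^sub>R axis j 1 + Im t *\<^sub>R (\<chi> i. \<i> * axis j 1 $ i)"
    by (simp add: vec_eq_iff axis_def complex_eq_iff)
  then have "D (axis j t) = Re t *\<^sub>R D (axis j 1) + Im t *\<^sub>R (\<i> * D (axis j 1))"
    by (simp add: linear_add[OF \<open>linear D\<close>] linear_scale[OF \<open>linear D\<close>] D_mult_i)
  also have "\<dots> = D (axis j 1) * (of_real (Re t) + \<i> * of_real (Im t))"
    by (simp add: scaleR_conv_of_real algebra_simps)
  finally show ?thesis by (simp add: complex_eq[symmetric])
qed

lemma holo_on_coord_line_derivative: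
  fixes f :: "complex^'n \<Rightarrow> complex"
  assumes "holo_on V f" "z \<in> V"
  shows "((\<lambda>t. f (coord_line z j t)) has_field_derivative pdz f j z) (at 0)"
proof -
  obtain D where D: "(f has_derivative D) (at z)" and D_mult_i: "\<And>v. D (\<chi> i. \<i> * v$i) = \<i> * D v"
    using assms unfolding holo_on_def by blast
  have "((\<lambda>t. z + axis j t) has_derivative (\<lambda>t. 0 + axis j t)) (at 0)"
    by (intro has_derivative_add has_derivative_const bounded_linear_imp_has_derivative bounded_linear_axis)
  then have "((\<lambda>t. coord_line z j t) has_derivative axis j) (at 0)"
    by (simp add: coord_line_eq_axis)
  then have "((f \<circ> (\<lambda>t. coord_line z j t)) has_derivative D \<circ> axis j) (at 0)"
    by (rule diff_chain_at) (simp add: D)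
  moreover have "D \<circ> axis j = (\<lambda>t. D (axis j 1) * t)"
    unfolding comp_def by (intro ext complex_linear_axis has_derivative_linear[OF D] D_mult_i)
  ultimately have "((\<lambda>t. f (coord_line z j t)) has_field_derivative D (axis j 1)) (at 0)"
    by (simp add: has_field_derivative_def o_def)
  then show ?thesis
    unfolding pdz_def by (metis DERIV_imp_deriv)
qed

lemma eventually_coord_line_in_open:
  fixes z :: "complex^'n"
  assumes "open V" "z \<in> V"
  shows "eventually (\<lambda>t. coord_line z j t \<in> V) (nhds 0)"
proof -
  have "continuous_on UNIV (\<lambda>t. coord_line z j t)"
    unfolding coord_line_eq_axis
    by (intro continuous_intros linear_continuous_on bounded_linear_axis)
  then have "open ((\<lambda>t. coord_line z j t) -` V)"
    using assms(1) by (simp add: continuous_on_open_vimage)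
  moreover have "0 \<in> (\<lambda>t. coord_line z j t) -` V"
    using assms(2) by simp
  ultimately show ?thesis
    unfolding eventually_nhds by blast
qed

lemma pdz_pairing_eq_0:
  fixes a X :: "'n::finite \<Rightarrow> complex^'n \<Rightarrow> complex"
  assumes "open V" "z \<in> V" "\<And>l. holo_on V (a l)" "\<And>l. holo_on V (X l)"
    and pairing: "\<forall>z\<in>V. (\<Sum>l\<in>UNIV. a l z * X l z) = 0"
  shows "(\<Sum>l\<in>UNIV. pdz (a l) j z * X l z + a l z * pdz (X l) j z) = 0"
proof -
  let ?g = "\<lambda>t. \<Sum>l\<in>UNIV. a l (coord_line z j t) * X l (coord_line z j t)"
  have "((\<lambda>t. a l (coord_line z j t) * X l (coord_line z j t)) has_field_derivative
      pdz (a l) j z * X l z + a l z * pdz (X l) j z) (at 0)" for l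
    using DERIV_mult[OF holo_on_coord_line_derivative[OF assms(3,2)] holo_on_coord_line_derivative[OF assms(4,2)]]
    by (simp add: mult.commute)
  then have "(?g has_field_derivative (\<Sum>l\<in>UNIV. pdz (a l) j z * X l z + a l z * pdz (X l) j z)) (at 0)"
    by (rule DERIV_sum)
  moreover have "eventually (\<lambda>t. ?g t = 0) (nhds 0)"
    using eventually_coord_line_in_open[OF assms(1,2)] by eventually_elim (use pairing in auto)
  ultimately have "((\<lambda>t. 0) has_field_derivative (\<Sum>l\<in>UNIV. pdz (a l) j z * X l z + a l z * pdz (X l) j z)) (at 0)"
    using DERIV_cong_ev[of 0 0 ?g "\<lambda>t. 0"] by simp
  then show ?thesis
    using DERIV_const DERIV_unique by blast
qed

(* Cartan's formula: since \<omega>(X) = 0, the Lie derivative L\<^sub>X \<omega> is the contraction \<iota>\<^sub>X d\<omega>. *)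
lemma lie_coeff_eq_contract_dform1:
  fixes a X :: "'n::finite \<Rightarrow> complex^'n \<Rightarrow> complex"
  assumes "open V" "z \<in> V" "\<And>l. holo_on V (a l)" "\<And>l. holo_on V (X l)"
    and "\<forall>z\<in>V. (\<Sum>l\<in>UNIV. a l z * X l z) = 0"
  shows "lie_coeff X a j z = (\<Sum>i\<in>UNIV. X i z * (pdz (a j) i z - pdz (a i) j z))"
proof -
  have "lie_coeff X a j z = (\<Sum>i\<in>UNIV. X i z * (pdz (a j) i z - pdz (a i) j z))
      + (\<Sum>l\<in>UNIV. pdz (a l) j z * X l z + a l z * pdz (X l) j z)"
    unfolding lie_coeff_def sum.distrib[symmetric] by (intro sum.cong refl) (simp add: algebra_simps)
  then show ?thesis
    using pdz_pairing_eq_0[OF assms] by simp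
qed

section \<open>Injectivity of \<theta>\<close>

lemma coord_mult_martinet_coeff_eq_0:
  fixes a X :: "'n::{finite,linorder} \<Rightarrow> complex^('n::{finite,linorder}) \<Rightarrow> complex"
  assumes "open V" "z \<in> V" "\<And>l. holo_on V (a l)" "\<And>l. holo_on V (X l)"
    and "\<forall>z\<in>V. (\<Sum>l\<in>UNIV. a l z * X l z) = 0"
    and "\<And>j. lie_coeff X a j z = h * a j z"
  shows "X j z * martinet_coeff a k z = 0"
  unfolding martinet_coeff_eq_wedge1_wedge2_power
proof (rule coord_mult_top_coeff_eq_0)
  show "(\<Sum>i\<in>UNIV. X i z * (pdz (a j) i z - pdz (a i) j z)) = h * a j z" for j
    using assms by (simp flip: lie_coeff_eq_contract_dform1)
  show "(\<Sum>j\<in>UNIV. a j z * X j z) = 0"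
    using assms by simp
qed

lemma continuous_factor_eq_0:
  fixes f g :: "'a::topological_space \<Rightarrow> 'b::{t1_space, semiring_no_zero_divisors}"
  assumes "continuous_on V f" "open V" "V \<subseteq> U"
    and "\<forall>z\<in>V. f z * g z = 0"
    and "interior {z\<in>U. g z = 0} = {}"
    and "z \<in> V"
  shows "f z = 0"
proof (rule ccontr)
  let ?W = "V \<inter> f -` (- {0})"
  assume "f z \<noteq> 0"
  then have "z \<in> ?W" using assms(6) by simp
  moreover have "open ?W"
    using assms(1,2) by (intro continuous_open_preimage) auto
  moreover have "?W \<subseteq> {z\<in>U. g z = 0}"
    using assms(3,4) by auto
  ultimately have "z \<in> interior {z\<in>U. g z = 0}"
    by (meson interior_maximal subsetD)
  then show False using assms(5) by simp
qed

theorem theorem3p1: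
  fixes k :: nat and U V :: "(complex^('n::{finite,linorder})) set"
    and a X :: "('n::{finite,linorder}) \<Rightarrow> complex^('n::{finite,linorder}) \<Rightarrow> complex"
  assumes "k \<ge> 1" and "CARD('n) = 2 * k + 1"
    and "sing_contact_first_smooth k U a"
    and "open V" and "V \<subseteq> U"
    and "inf_contact_transf V a X"
    and "\<forall>z\<in>V. (\<Sum>j\<in>UNIV. a j z * X j z) = 0"
  shows "\<forall>z\<in>V. \<forall>j. X j z = 0"
proof (intro ballI allI)
  fix z j assume "z \<in> V"
  have holo_a: "holo_on V (a l)" for l
    using assms(3,5) holo_on_subset unfolding sing_contact_first_smooth_def by blast
  have thin: "interior {z\<in>U. martinet_coeff a k z = 0} = {}"
    using assms(3) unfolding sing_contact_first_smooth_def by blast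
  obtain h where holo_X: "\<And>l. holo_on V (X l)"
    and lie: "\<And>z j. z \<in> V \<Longrightarrow> lie_coeff X a j z = h z * a j z"
    using assms(6) unfolding inf_contact_transf_def by blast
  have "X j w * martinet_coeff a k w = 0" if "w \<in> V" for w
    using assms(4) that holo_a holo_X assms(7) lie[OF that] by (rule coord_mult_martinet_coeff_eq_0)
  then show "X j z = 0"
    using holo_on_imp_continuous_on[OF holo_X] assms(4,5) thin \<open>z \<in> V\<close>
    by (intro continuous_factor_eq_0) auto
qed

end
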